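(* Let $G_r$ be a cactus request graph, i.e., a directed graph such that any two distinct cycles of its underlying undirected graph share at most a single node. Then $\mathrm{ew}_{\mathcal X}(G^{\mathcal X}_r)\le 2$ holds for every extraction order $G^{\mathcal X}_r$ of $G_r$.
   Context: An extraction order of a directed graph $G_r=(V_r,E_r)$ is a rooted directed acyclic graph $G^{\mathcal X}_r=(V_r,E^{\mathcal X}_r,s_r)$ in which every node is reachable from $s_r$ and $E^{\mathcal X}_r$ is obtained from $E_r$ by reversing some (possibly no) edges. A confluence from $i$ to $j$ is a pair of directed paths in $E^{\mathcal X}_r$ from $i$ to $j$ sharing no node other than $i,j$. For $e\in E^{\mathcal X}_r$, its label set $\mathcal L_e$ is the set of nodes $j$ such that $e$ lies on some confluence with target $j$. The outgoing edges of each node are partitioned into bags: classes of the equivalence relation generated by $e\sim e'$ iff $\mathcal L_e\cap\mathcal L_{e'}\neq\emptyset$; a bag's label set is $\mathcal L_B=\bigcup_{e\in B}\mathcal L_e$. The extraction width is $\mathrm{ew}_{\mathcal X}(G^{\mathcal X}_r)=1+\max|\mathcal L_B|$ over all bags of all nodes. *)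

theory Defs
  imports "Graph_Theory.Graph_Theory"
begin

definition ucycle :: "('a,'b) pre_digraph \<Rightarrow> 'a list \<Rightarrow> 'b list \<Rightarrow> bool" where
  "ucycle G vs es \<equiv> es \<noteq> [] \<and> length vs = length es \<and> distinct vs \<and> distinct es
     \<and> set es \<subseteq> arcs G \<and> set vs \<subseteq> verts G
     \<and> (\<forall>i < length es. {tail G (es ! i), head G (es ! i)}
                          = {vs ! i, vs ! ((i + 1) mod length es)})"

definition cactus :: "('a,'b) pre_digraph \<Rightarrow> bool" where
  "cactus G \<equiv> \<forall>vs es vs' es'. ucycle G vs es \<and> ucycle G vs' es' \<and> set es \<noteq> set es'
       \<longrightarrow> card (set vs \<inter> set vs') \<le> 1"

definition extraction_order :: "('a,'b) pre_digraph \<Rightarrow> ('a,'b) pre_digraph \<Rightarrow> 'a \<Rightarrow> bool" where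
  "extraction_order G H s \<equiv> verts H = verts G \<and> arcs H = arcs G
     \<and> (\<forall>e \<in> arcs G. (tail H e = tail G e \<and> head H e = head G e)
                    \<or> (tail H e = head G e \<and> head H e = tail G e))
     \<and> s \<in> verts H \<and> (\<forall>v \<in> verts H. s \<rightarrow>\<^sup>*\<^bsub>H\<^esub> v)
     \<and> \<not> (\<exists>p. pre_digraph.cycle H p)"

definition confluence :: "('a,'b) pre_digraph \<Rightarrow> 'a \<Rightarrow> 'a \<Rightarrow> 'b list \<Rightarrow> 'b list \<Rightarrow> bool" where
  "confluence H i j p q \<equiv> pre_digraph.apath H i p j \<and> pre_digraph.apath H i q j \<and> p \<noteq> q
     \<and> set (pre_digraph.awalk_verts H i p) \<inter> set (pre_digraph.awalk_verts H i q) \<subseteq> {i, j}"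

definition label_set :: "('a,'b) pre_digraph \<Rightarrow> 'b \<Rightarrow> 'a set" where
  "label_set H e = {j. \<exists>i p q. confluence H i j p q \<and> e \<in> set p \<union> set q}"

definition bag_rel :: "('a,'b) pre_digraph \<Rightarrow> 'a \<Rightarrow> ('b \<times> 'b) set" where
  "bag_rel H u = {(e, e'). e \<in> out_arcs H u \<and> e' \<in> out_arcs H u
                          \<and> label_set H e \<inter> label_set H e' \<noteq> {}}"

definition bags :: "('a,'b) pre_digraph \<Rightarrow> 'a \<Rightarrow> 'b set set" where
  "bags H u = out_arcs H u // ((bag_rel H u)\<^sup>*)"

definition bag_label :: "('a,'b) pre_digraph \<Rightarrow> 'b set \<Rightarrow> 'a set" where
  "bag_label H B = \<Union> (label_set H ` B)"

text \<open>Extraction width; the max over an empty family of bags is taken as 0.\<close>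
definition extraction_width :: "('a,'b) pre_digraph \<Rightarrow> nat" where
  "extraction_width H = 1 + Max (insert 0
      {card (bag_label H B) | B u. u \<in> verts H \<and> B \<in> bags H u})"

end

theory Submission
  imports Defs
begin

text \<open>The two paths of a confluence from i to j, read in G with the original orientations,
  form an undirected cycle whose arcs determine j: it is the only head of these arcs in H
  that is not also a tail. An arc e on a confluence is not a loop, so two such cycles through e
  share both ends of e and, G being a cactus, have the same arcs. Hence every label set has at
  most one element, all arcs of a bag carry the same label set, and every bag label has at most
  one element.\<close>

definition uwalk :: "('a,'b) pre_digraph \<Rightarrow> 'a list \<Rightarrow> 'b list \<Rightarrow> bool" where
  "uwalk G vs es \<longleftrightarrow> length vs = Suc (length es)
     \<and> (\<forall>i < length es. {tail G (es ! i), head G (es ! i)} = {vs ! i, vs ! Suc i})"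

lemma uwalk_Nil_iff: "uwalk G vs [] \<longleftrightarrow> (\<exists>v. vs = [v])"
  by (auto simp: uwalk_def length_Suc_conv)

lemma uwalk_Cons_iff:
  "uwalk G (v # vs) (e # es) \<longleftrightarrow>
     vs \<noteq> [] \<and> {tail G e, head G e} = {v, hd vs} \<and> uwalk G vs es"
  by (cases vs) (auto simp: uwalk_def All_less_Suc2)

lemma (in pre_digraph) uwalk_awalk_verts: "cas u p v \<Longrightarrow> uwalk G (awalk_verts u p) p"
proof (induct p arbitrary: u)
  case (Cons e p)
  then show ?case by (cases p) (auto simp: uwalk_Cons_iff)
qed (simp add: uwalk_Nil_iff)

lemma uwalk_append:
  "uwalk G vs es \<Longrightarrow> uwalk G (last vs # ws) fs \<Longrightarrow> uwalk G (vs @ ws) (es @ fs)"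
proof (induct es arbitrary: vs)
  case Nil then show ?case by (auto simp: uwalk_Nil_iff)
next
  case (Cons e es)
  then obtain v vs' where "vs = v # vs'" by (cases vs) (auto simp: uwalk_def)
  with Cons show ?case by (auto simp: uwalk_Cons_iff)
qed

lemma uwalk_rev:
  assumes "uwalk G vs es"
  shows "uwalk G (rev vs) (rev es)"
  unfolding uwalk_def
proof (intro conjI allI impI)
  show "length (rev vs) = Suc (length (rev es))" using assms by (simp add: uwalk_def)
  fix i assume i: "i < length (rev es)"
  let ?k = "length es - Suc i"
  have "rev es ! i = es ! ?k" "rev vs ! i = vs ! Suc ?k" "rev vs ! Suc i = vs ! ?k"
    using assms i by (auto simp: uwalk_def rev_nth Suc_diff_Suc)
  then show "{tail G (rev es ! i), head G (rev es ! i)} = {rev vs ! i, rev vs ! Suc i}"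
    using assms i by (auto simp: uwalk_def insert_commute)
qed

lemma uwalk_cong:
  assumes "uwalk G vs es"
    and "\<And>e. e \<in> set es \<Longrightarrow> {tail H e, head H e} = {tail G e, head G e}"
  shows "uwalk H vs es"
  using assms by (auto simp: uwalk_def)

lemma ucycle_if_closed_uwalk:
  assumes w: "uwalk G (vs @ [hd vs]) es" and "vs \<noteq> []" "distinct vs" "distinct es"
    and "set es \<subseteq> arcs G" "set vs \<subseteq> verts G"
  shows "ucycle G vs es"
  unfolding ucycle_def
proof (intro conjI allI impI)
  have n: "length vs = length es" using w by (simp add: uwalk_def)
  then show "es \<noteq> []" "length vs = length es" using \<open>vs \<noteq> []\<close> by auto
  fix i assume i: "i < length es"
  have "(vs @ [hd vs]) ! Suc i = vs ! ((i + 1) mod length es)"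
  proof (cases "Suc i < length es")
    case False
    then have "Suc i = length es" using i by simp
    then show ?thesis using n \<open>vs \<noteq> []\<close> by (simp add: nth_append hd_conv_nth)
  qed (use n in \<open>simp add: nth_append\<close>)
  then show "{tail G (es ! i), head G (es ! i)} = {vs ! i, vs ! ((i + 1) mod length es)}"
    using w i n by (auto simp: uwalk_def nth_append)
qed (use assms in auto)

lemma ucycle_arc_ends:
  assumes "ucycle G vs es" "e \<in> set es"
  shows "tail G e \<in> set vs" "head G e \<in> set vs"
proof -
  obtain k where k: "k < length es" "e = es ! k" using assms(2) by (auto simp: in_set_conv_nth)
  have "(k + 1) mod length es < length es" using k by (intro mod_less_divisor) linarith
  then have "{vs ! k, vs ! ((k + 1) mod length es)} \<subseteq> set vs" using assms k by (auto simp: ucycle_def)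
  moreover have "{tail G e, head G e} = {vs ! k, vs ! ((k + 1) mod length es)}"
    using assms k by (auto simp: ucycle_def)
  ultimately have "{tail G e, head G e} \<subseteq> set vs" by simp
  then show "tail G e \<in> set vs" "head G e \<in> set vs" by auto
qed

lemma cactus_ucycles_share_arc:
  assumes "cactus G" "ucycle G vs es" "ucycle G vs' es'"
    and "e \<in> set es" "e \<in> set es'" "tail G e \<noteq> head G e"
  shows "set es = set es'"
proof (rule ccontr)
  assume "set es \<noteq> set es'"
  then have "card (set vs \<inter> set vs') \<le> 1" using assms(1-3) unfolding cactus_def by blast
  moreover have "{tail G e, head G e} \<subseteq> set vs \<inter> set vs'"
    using ucycle_arc_ends assms(2-5) by fastforce
  then have "card {tail G e, head G e} \<le> card (set vs \<inter> set vs')" by (intro card_mono) auto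
  ultimately show False using assms(6) by simp
qed

context wf_digraph
begin

lemma apath_heads_tails:
  assumes "apath u p v" "p \<noteq> []"
  shows "v \<in> head G ` set p" "v \<notin> tail G ` set p" "u \<notin> head G ` set p"
    "head G ` set p \<subseteq> insert v (tail G ` set p)"
proof -
  have d: "distinct (awalk_verts u p)" using assms(1) by (simp add: apath_def)
  have c: "cas u p v" using assms(1) by (auto simp: apath_def awalk_def)
  have tails: "awalk_verts u p = map (tail G) p @ [v]"
    using awalk_verts_conv[of u p] awlast_if_cas[OF c] assms(2) by simp
  have heads: "awalk_verts u p = u # map (head G) p"
    using awalk_verts_conv'[OF c] assms(2) c by (cases p) auto
  show "v \<notin> tail G ` set p" using d tails by auto
  show "u \<notin> head G ` set p" using d heads by auto
  have "set (u # map (head G) p) = set (map (tail G) p @ [v])" using tails heads by simp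
  then show "head G ` set p \<subseteq> insert v (tail G ` set p)" by auto
  have "v = last (u # map (head G) p)" using tails heads by simp
  then show "v \<in> head G ` set p" using assms(2) by (simp add: last_map)
qed

lemma apath_through_arc:
  assumes "apath u p v" "e \<in> set p" "tail G e = u" "head G e = v"
  shows "p = [e]"
proof -
  obtain p1 p2 where p: "p = p1 @ e # p2" using assms(2) by (auto simp: in_set_conv_decomp)
  have "apath u p1 (awlast u p1)" "apath (awlast u p1) (e # p2) v"
    using assms(1) unfolding p apath_append_iff by auto
  moreover have "awlast u p1 = u"
    using \<open>apath (awlast u p1) (e # p2) v\<close> assms(3) by (simp add: apath_Cons_iff)
  moreover have "apath v p2 v"
    using \<open>apath (awlast u p1) (e # p2) v\<close> assms(4) by (simp add: apath_Cons_iff)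
  ultimately have "p1 = []" "p2 = []" using apath_nonempty_ends by fastforce+
  then show ?thesis using p by simp
qed

lemma confluence_nonempty:
  assumes "confluence G i j p q"
  shows "i \<noteq> j" "p \<noteq> []" "q \<noteq> []"
proof -
  have "apath i p j" "apath i q j" "p \<noteq> q" using assms by (auto simp: confluence_def)
  then show "i \<noteq> j" using apath_ends by metis
  then show "p \<noteq> []" "q \<noteq> []" using \<open>apath i p j\<close> \<open>apath i q j\<close> by (auto simp: apath_Nil_iff)
qed

lemma confluence_target:
  assumes "confluence G i j p q"
  shows "head G ` (set p \<union> set q) - tail G ` (set p \<union> set q) = {j}"
proof -
  have "apath i p j" "apath i q j" using assms by (auto simp: confluence_def)
  with confluence_nonempty[OF assms] show ?thesis
    using apath_heads_tails[of i p j] apath_heads_tails[of i q j] by blast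
qed

lemma confluence_arcs_disjoint:
  assumes "confluence G i j p q"
  shows "set p \<inter> set q = {}"
proof (rule ccontr)
  assume "set p \<inter> set q \<noteq> {}"
  then obtain e where e: "e \<in> set p" "e \<in> set q" by blast
  have p: "apath i p j" and q: "apath i q j" and "p \<noteq> q"
    and meet: "set (awalk_verts i p) \<inter> set (awalk_verts i q) \<subseteq> {i, j}"
    using assms by (auto simp: confluence_def)
  have "awalk i p j" "awalk i q j" using p q by (auto simp: apath_def)
  then have "tail G e \<in> {i, j}" "head G e \<in> {i, j}"
    using meet e awalk_verts_arc1 awalk_verts_arc2 by blast+
  moreover have "tail G e \<noteq> j" "head G e \<noteq> i"
    using apath_heads_tails[OF p] confluence_nonempty[OF assms] e by (metis image_eqI)+
  ultimately have "tail G e = i" "head G e = j" by auto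
  then have "p = [e]" "q = [e]"
    using apath_through_arc[OF p e(1)] apath_through_arc[OF q e(2)] by blast+
  with \<open>p \<noteq> q\<close> show False by simp
qed

lemma apath_distinct_arcs: "apath u p v \<Longrightarrow> distinct p"
  using awalk_verts_conv'[of u p v] by (auto simp: apath_def awalk_def distinct_map split: if_splits)

lemma confluence_distinct_arcs:
  assumes "confluence G i j p q"
  shows "distinct (p @ rev q)"
  using assms confluence_arcs_disjoint[OF assms] apath_distinct_arcs by (auto simp: confluence_def)

lemma confluence_closed_uwalk:
  assumes "confluence G i j p q"
  obtains vs where "uwalk G (vs @ [hd vs]) (p @ rev q)"
    and "vs \<noteq> []" "distinct vs" "set vs \<subseteq> verts G"
proof -
  have p: "apath i p j" and q: "apath i q j"
    and meet: "set (awalk_verts i p) \<inter> set (awalk_verts i q) \<subseteq> {i, j}"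
    using assms by (auto simp: confluence_def)
  let ?Vp = "awalk_verts i p" and ?Vq = "awalk_verts i q"
  have cas: "cas i p j" "cas i q j" using p q by (auto simp: apath_def awalk_def)
  have Vp: "butlast ?Vp @ [j] = ?Vp" "hd ?Vp = i" "distinct ?Vp"
    using p awhd_if_cas[OF cas(1)] awlast_if_cas[OF cas(1)] append_butlast_last_id[of ?Vp]
    by (auto simp: apath_def)
  have Vq: "i # tl ?Vq = ?Vq" "j # tl (rev ?Vq) = rev ?Vq" "distinct ?Vq"
    using q awhd_if_cas[OF cas(2)] awlast_if_cas[OF cas(2)] hd_Cons_tl[of ?Vq]
      hd_Cons_tl[of "rev ?Vq"] by (auto simp: apath_def hd_rev)
  have setVp: "set ?Vp = insert j (set (butlast ?Vp))"
    using Vp(1) by (metis Un_commute empty_set insert_is_Un list.simps(15) set_append)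
  have setVq: "set ?Vq = insert i (set (tl ?Vq))" using Vq(1) by (metis list.simps(15))
  define vs where "vs = butlast ?Vp @ rev (tl ?Vq)"
  have "butlast ?Vp \<noteq> []" using confluence_nonempty[OF assms]
    by (metis length_butlast length_awalk_verts diff_Suc_1 length_0_conv)
  then have ne: "vs \<noteq> []" and hd: "hd vs = i" unfolding vs_def by (simp, metis Vp(1,2) hd_append2)
  have "uwalk G ?Vp p" "uwalk G (last ?Vp # tl (rev ?Vq)) (rev q)"
    using uwalk_awalk_verts[OF cas(1)] uwalk_rev[OF uwalk_awalk_verts[OF cas(2)]]
      Vq(2) awlast_if_cas[OF cas(1)] by auto
  then have walk: "uwalk G (?Vp @ tl (rev ?Vq)) (p @ rev q)" by (rule uwalk_append)
  have closed: "?Vp @ tl (rev ?Vq) = vs @ [hd vs]"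
  proof -
    have glue: "?Vp @ tl (rev ?Vq) = butlast ?Vp @ rev ?Vq"
      using Vp(1) Vq(2) by (metis append_Cons append_assoc self_append_conv2)
    have "rev ?Vq = rev (tl ?Vq) @ [i]" using Vq(1) by (metis rev.simps(2))
    then show ?thesis using hd unfolding glue vs_def by simp
  qed
  have "distinct vs"
  proof -
    have "j \<notin> set (butlast ?Vp)"
      using Vp(1,3) by (metis distinct_append disjoint_iff list.set_intros(1))
    moreover have "i \<notin> set (tl ?Vq)" using Vq(1,3) by (metis distinct.simps(2))
    ultimately have "set (butlast ?Vp) \<inter> set (tl ?Vq) = {}" using meet setVp setVq by blast
    then show ?thesis using Vp(3) Vq(3) unfolding vs_def by (simp add: distinct_butlast distinct_tl)
  qed
  moreover have "set vs \<subseteq> verts G"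
    using p q awalk_verts_in_verts setVp setVq unfolding vs_def apath_def awalk_def by auto
  ultimately show ?thesis using that ne walk unfolding closed by simp
qed

end

lemma extraction_order_arc_ends:
  assumes "extraction_order G H s" "e \<in> arcs G"
  shows "{tail H e, head H e} = {tail G e, head G e}"
proof -
  have "(tail H e = tail G e \<and> head H e = head G e) \<or> (tail H e = head G e \<and> head H e = tail G e)"
    using assms by (simp add: extraction_order_def)
  then show ?thesis by (auto simp: insert_commute)
qed

lemma extraction_order_wf_digraph:
  assumes "wf_digraph G" "extraction_order G H s"
  shows "wf_digraph H"
proof
  fix e assume "e \<in> arcs H"
  then have "e \<in> arcs G" "verts H = verts G" using assms(2) by (auto simp: extraction_order_def)
  then have "{tail H e, head H e} \<subseteq> verts H"
    using extraction_order_arc_ends[OF assms(2)] wf_digraph.wellformed[OF assms(1)] by auto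
  then show "tail H e \<in> verts H" "head H e \<in> verts H" by auto
qed

lemma confluence_ucycle:
  assumes "wf_digraph G" "extraction_order G H s" "confluence H i j p q"
  obtains vs where "ucycle G vs (p @ rev q)"
proof -
  interpret H: wf_digraph H using extraction_order_wf_digraph[OF assms(1,2)] .
  obtain vs where vs: "uwalk H (vs @ [hd vs]) (p @ rev q)"
    "vs \<noteq> []" "distinct vs" "set vs \<subseteq> verts H"
    using H.confluence_closed_uwalk[OF assms(3)] .
  have arcs: "set (p @ rev q) \<subseteq> arcs G"
    using assms(2,3) by (auto simp: confluence_def extraction_order_def H.apath_def H.awalk_def)
  then have "uwalk G (vs @ [hd vs]) (p @ rev q)"
    using uwalk_cong[OF vs(1)] extraction_order_arc_ends[OF assms(2)] by blast
  moreover have "set vs \<subseteq> verts G" using vs(4) assms(2) by (simp add: extraction_order_def)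
  ultimately have "ucycle G vs (p @ rev q)"
    using ucycle_if_closed_uwalk vs(2,3) H.confluence_distinct_arcs[OF assms(3)] arcs by blast
  then show ?thesis by (rule that)
qed

lemma label_set_subsingleton:
  assumes "wf_digraph G" "cactus G" "extraction_order G H s"
    and "j \<in> label_set H e" "j' \<in> label_set H e"
  shows "j = j'"
proof -
  interpret H: wf_digraph H using extraction_order_wf_digraph[OF assms(1,3)] .
  obtain i p q i' p' q' where cf: "confluence H i j p q" "confluence H i' j' p' q'"
    and e: "e \<in> set p \<union> set q" "e \<in> set p' \<union> set q'"
    using assms(4,5) unfolding label_set_def by blast
  obtain vs where C: "ucycle G vs (p @ rev q)" using confluence_ucycle[OF assms(1,3) cf(1)] .
  obtain vs' where C': "ucycle G vs' (p' @ rev q')" using confluence_ucycle[OF assms(1,3) cf(2)] .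
  have "e \<in> arcs G" "tail H e \<noteq> head H e"
    using cf(1) e(1) H.no_loops_in_apath assms(3)
    by (auto simp: confluence_def extraction_order_def H.apath_def H.awalk_def)
  then have "tail G e \<noteq> head G e"
    using extraction_order_arc_ends[OF assms(3), of e] by auto
  then have "set (p @ rev q) = set (p' @ rev q')"
    using cactus_ucycles_share_arc[OF assms(2) C C'] e by simp
  then have arcs_eq: "set p \<union> set q = set p' \<union> set q'" by simp
  have "{j'} = {j}"
    using H.confluence_target[OF cf(1)] unfolding arcs_eq H.confluence_target[OF cf(2)] .
  then show ?thesis by simp
qed

lemma label_set_constant_on_bag:
  assumes subsingleton: "\<And>e j j'. j \<in> label_set H e \<Longrightarrow> j' \<in> label_set H e \<Longrightarrow> j = j'"
    and "B \<in> bags H u" "e \<in> B" "e' \<in> B"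
  shows "label_set H e = label_set H e'"
proof -
  have step: "label_set H x = label_set H y" if "(x, y) \<in> bag_rel H u" for x y
    using that subsingleton unfolding bag_rel_def by blast
  have "label_set H x = label_set H y" if "(x, y) \<in> (bag_rel H u)\<^sup>*" for x y
    using that by induct (auto dest: step)
  moreover obtain e0 where "B = (bag_rel H u)\<^sup>* `` {e0}"
    using assms(2) unfolding bags_def by (rule quotientE) blast
  ultimately have "label_set H e0 = label_set H e" "label_set H e0 = label_set H e'"
    using assms(3,4) by blast+
  then show ?thesis by simp
qed

lemma card_bag_label_le_1:
  assumes "\<And>e j j'. j \<in> label_set H e \<Longrightarrow> j' \<in> label_set H e \<Longrightarrow> j = j'"
    and "B \<in> bags H u"
  shows "card (bag_label H B) \<le> 1"
proof (cases "B = {}")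
  case False
  then obtain e where "e \<in> B" by blast
  have "label_set H e' = label_set H e" if "e' \<in> B" for e'
    by (rule label_set_constant_on_bag) (fact assms(1), fact assms(2), fact that, fact \<open>e \<in> B\<close>)
  then have "bag_label H B = label_set H e" using \<open>e \<in> B\<close> unfolding bag_label_def by blast
  moreover have "card (label_set H e) \<le> 1"
    using assms(1) card_le_Suc0_iff_eq[of "label_set H e"] by (cases "finite (label_set H e)") auto
  ultimately show ?thesis by simp
qed (simp add: bag_label_def)

lemma extraction_width_le_2_if_label_sets_subsingleton:
  assumes "\<And>e j j'. j \<in> label_set H e \<Longrightarrow> j' \<in> label_set H e \<Longrightarrow> j = j'"
  shows "extraction_width H \<le> 2"
proof -
  let ?S = "{card (bag_label H B) | B u. u \<in> verts H \<and> B \<in> bags H u}"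
  have "?S \<subseteq> {..1}" using card_bag_label_le_1[OF assms] by auto
  then have "finite (insert 0 ?S)" "\<forall>x \<in> insert 0 ?S. x \<le> 1"
    by (auto intro: finite_subset)
  then have "Max (insert 0 ?S) \<le> 1" by (meson Max_le_iff insert_not_empty)
  then show ?thesis unfolding extraction_width_def by simp
qed

theorem theorem33:
  fixes G H :: "('a,'b) pre_digraph" and s :: 'a
  assumes "fin_digraph G"
    and "cactus G"
    and "extraction_order G H s"
  shows "extraction_width H \<le> 2"
proof (rule extraction_width_le_2_if_label_sets_subsingleton)
  have "wf_digraph G" using assms(1) by (simp add: fin_digraph_def)
  then show "j = j'" if "j \<in> label_set H e" "j' \<in> label_set H e" for e j j'
    by (rule label_set_subsingleton[OF _ assms(2,3) that])
qed

end
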